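(* The critically marked moduli space $\mathcal M_2^{\mathrm{cm}}$ has the homotopy type of the $2$-sphere. More precisely, the map $\mathcal M_2^{\mathrm{cm}}\to\hat{\mathbf C}$ given by $(\alpha,\beta,\gamma,\delta)\mapsto\alpha^3/\gamma=B/(A-1)=A^3/C$ is a smooth surjection each of whose fibers is isomorphic to $\mathbf C$, and the topological $2$-sphere $$\{(A,B,C):\ 0\le A\le1,\ |B|=\sqrt{A^3(1-A)},\ C=-\bar B\}$$ is embedded in $\mathcal M_2^{\mathrm{cm}}$ as a deformation retract and maps homeomorphically onto $\hat{\mathbf C}$.
   Context: A critically marked quadratic rational map is $(f,\omega_1,\omega_2)$ with $f$ a holomorphic degree-$2$ self-map of the Riemann sphere and $\omega_1\neq\omega_2$ its critical points; $\mathcal M_2^{\mathrm{cm}}$ is the set of Möbius conjugacy classes of such triples. Each class has a representative $(f,0,\infty)$ with $f(z)=(\alpha z^2+\beta)/(\gamma z^2+\delta)$, $\alpha\delta-\beta\gamma=1$, unique up to $(\alpha,\beta,\gamma,\delta)\mapsto(\alpha\lambda,\beta\lambda^{-3},\gamma\lambda^3,\delta\lambda^{-1})$; with $A=\alpha\delta$, $B=\alpha^3\beta$, $C=\gamma\delta^3$, $\mathcal M_2^{\mathrm{cm}}$ is identified with the surface $W=\{(A,B,C)\in\mathbf C^3: A^3(A-1)=BC\}$ with its induced topology. *)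

theory Defs
  imports "HOL-Analysis.Analysis"
begin

type_synonym pt = "complex \<times> complex \<times> complex"

text \<open>The surface W = {(A,B,C) : A^3 (A - 1) = B C}, identified with the critically
  marked moduli space.\<close>
definition W :: "pt set" where
  "W = {(A,B,C). A^3 * (A - 1) = B * C}"

text \<open>The Riemann sphere as complex option (None = infinity) with the one-point
  compactification (Alexandroff) topology.\<close>
definition riemann_sphere :: "complex option topology" where
  "riemann_sphere = topology (\<lambda>U. open {z. Some z \<in> U} \<and> (None \<in> U \<longrightarrow> compact {z. Some z \<notin> U}))"

definition Phi :: "pt \<Rightarrow> complex option" where
  "Phi p = (case p of (A,B,C) \<Rightarrow>
      if A \<noteq> 1 then Some (B / (A - 1))
      else if C \<noteq> 0 then Some (A^3 / C) else None)"

definition S2 :: "pt set" where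
  "S2 = {(A,B,C). A \<in> \<real> \<and> 0 \<le> Re A \<and> Re A \<le> 1 \<and>
          cmod B = sqrt (Re A ^ 3 * (1 - Re A)) \<and> C = - cnj B}"

definition holo3 :: "(pt \<Rightarrow> complex) \<Rightarrow> pt set \<Rightarrow> bool" where
  "holo3 f U \<longleftrightarrow> open U \<and> (\<forall>x\<in>U. \<exists>L. (f has_derivative L) (at x) \<and>
      (\<forall>c a b d. L (c * a, c * b, c * d) = c * L (a, b, d)))"

text \<open>A map from X (a subset of C^3) to the Riemann sphere is smooth (holomorphic) if,
  near every point, in the standard chart of the sphere (z near finite values,
  1/z near infinity) it is the restriction of a holomorphic function on an open
  subset of C^3.\<close>
definition holo_to_sphere :: "(pt \<Rightarrow> complex option) \<Rightarrow> pt set \<Rightarrow> bool" where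
  "holo_to_sphere F X \<longleftrightarrow> (\<forall>p\<in>X.
     (F p \<noteq> None \<longrightarrow> (\<exists>U g. p \<in> U \<and> holo3 g U \<and> (\<forall>q\<in>U \<inter> X. F q = Some (g q)))) \<and>
     (F p = None \<longrightarrow> (\<exists>U g. p \<in> U \<and> holo3 g U \<and>
         (\<forall>q\<in>U \<inter> X. F q \<noteq> Some 0 \<and>
             F q = (if g q = 0 then None else Some (inverse (g q)))))))"

definition biholo_to_C :: "pt set \<Rightarrow> bool" where
  "biholo_to_C Y \<longleftrightarrow> (\<exists>\<phi> \<psi> V. bij_betw \<phi> UNIV Y \<and>
      (\<lambda>t. fst (\<phi> t)) holomorphic_on UNIV \<and>
      (\<lambda>t. fst (snd (\<phi> t))) holomorphic_on UNIV \<and>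
      (\<lambda>t. snd (snd (\<phi> t))) holomorphic_on UNIV \<and>
      Y \<subseteq> V \<and> holo3 \<psi> V \<and> (\<forall>t. \<psi> (\<phi> t) = t))"

definition deformation_retract_of :: "'a::topological_space set \<Rightarrow> 'a set \<Rightarrow> bool" where
  "deformation_retract_of S X \<longleftrightarrow> S \<subseteq> X \<and> (\<exists>r. r ` X \<subseteq> S \<and> (\<forall>x\<in>S. r x = x) \<and>
      homotopic_with (\<lambda>h. \<forall>x\<in>S. h x = x) (top_of_set X) (top_of_set X) id r)"

end

theory Submission
  imports Defs "HOL-Homology.Invariance_of_Domain"
begin

(*
  Every fibre of Phi : W -> Riemann sphere is a copy of C: over w not in {0, infinity} it is
  the twisted cubic t |-> (t, w (t - 1), t^3 / w), over 0 it is {(0, 0, t)} and over infinity it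
  is {(1, t, 0)}.  Each fibre meets S2 in exactly one point, whose A-coordinate is the unique
  a in [0, 1] with a^3 = |w|^2 (1 - a).  So Phi restricts to a continuous bijection from the
  compact S2 onto the Hausdorff Riemann sphere, i.e. a homeomorphism, and r = (Phi|S2)^-1 o Phi
  is a continuous retraction of W onto S2.

  The deformation moves p = (A, B, C) inside its fibre towards r p = (A', B', C'): A and B are
  interpolated linearly, and over w not in {0, infinity} the C-coordinate is then forced to be
  ((1 - s) A + s A')^3 / w.  Expanding the cube, the only terms that are not visibly continuous
  are A^2 A' / w and A A'^2 / w.  Their cubes are C^2 C' and C C'^2, so they tend to 0 at the
  fibres over 0 and infinity, where C' = 0 and C = 0 respectively.
*)

lemma continuous_on_dominated_off_openin:
  fixes f :: "'a::topological_space \<Rightarrow> 'b::real_normed_vector"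
  assumes G: "openin (top_of_set S) G" and f: "continuous_on G f" and h: "continuous_on S h"
    and dominated: "\<And>x. x \<in> S \<Longrightarrow> norm (f x) \<le> h x"
    and vanishing: "\<And>x. x \<in> S - G \<Longrightarrow> h x = 0"
  shows "continuous_on S f"
  unfolding continuous_on_def
proof
  fix x assume "x \<in> S"
  show "(f \<longlongrightarrow> f x) (at x within S)"
  proof (cases "x \<in> G")
    case True
    obtain N where "open N" "G = S \<inter> N" using G by (auto simp: openin_open)
    then have "at x within S = at x within G"
      using True by (intro at_within_nhd[of x N]) auto
    then show ?thesis using f True by (simp add: continuous_on_def)
  next
    case False
    then have "h x = 0" "f x = 0" using vanishing dominated[of x] \<open>x \<in> S\<close> by auto
    have "(h \<longlongrightarrow> 0) (at x within S)" using h \<open>x \<in> S\<close> \<open>h x = 0\<close> by (metis continuous_on_def)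
    moreover have "eventually (\<lambda>y. norm (f y) \<le> h y) (at x within S)"
      using dominated by (auto simp: eventually_at_filter)
    ultimately show ?thesis using \<open>f x = 0\<close> Lim_null_comparison by fastforce
  qed
qed

lemma deformation_retract_of_imp_homotopy_equivalent_space:
  assumes "deformation_retract_of S X"
  shows "top_of_set X homotopy_equivalent_space top_of_set S"
proof -
  obtain r where "S \<subseteq> X" "r ` X \<subseteq> S" "\<forall>x\<in>S. r x = x"
    and hom: "homotopic_with (\<lambda>h. \<forall>x\<in>S. h x = x) (top_of_set X) (top_of_set X) id r"
    using assms unfolding deformation_retract_of_def by blast
  show ?thesis
  proof (rule deformation_retract_imp_homotopy_equivalent_space)
    show "homotopic_with (\<lambda>x. True) (top_of_set X) (top_of_set X) r id"
      using homotopic_with_symD[OF homotopic_with_mono[OF hom]] by simp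
    have "continuous_on X r"
      using homotopic_with_imp_continuous_maps[OF hom] by simp
    then show "retraction_maps (top_of_set X) (top_of_set S) r id"
      using \<open>S \<subseteq> X\<close> \<open>r ` X \<subseteq> S\<close> \<open>\<forall>x\<in>S. r x = x\<close>
      by (auto simp: retraction_maps_def)
  qed
qed

section \<open>Complex differentiability in three variables\<close>

definition complex_linear3 :: "(pt \<Rightarrow> complex) \<Rightarrow> bool" where
  "complex_linear3 L \<longleftrightarrow> (\<forall>c a b d. L (c * a, c * b, c * d) = c * L (a, b, d))"

definition cdifferentiable_at :: "(pt \<Rightarrow> complex) \<Rightarrow> pt \<Rightarrow> bool" where
  "cdifferentiable_at f x \<longleftrightarrow> (\<exists>L. (f has_derivative L) (at x) \<and> complex_linear3 L)"

lemma holo3_iff: "holo3 f U \<longleftrightarrow> open U \<and> (\<forall>x\<in>U. cdifferentiable_at f x)"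
  unfolding holo3_def cdifferentiable_at_def complex_linear3_def by blast

lemma holo3_imp_continuous_on: "holo3 f U \<Longrightarrow> continuous_on U f"
  unfolding holo3_def
  by (meson continuous_at_imp_continuous_on has_derivative_continuous)

lemma cdifferentiable_at_linear:
  "bounded_linear L \<Longrightarrow> complex_linear3 L \<Longrightarrow> cdifferentiable_at L x"
  unfolding cdifferentiable_at_def using bounded_linear_imp_has_derivative by blast

lemma cdifferentiable_at_const: "cdifferentiable_at (\<lambda>_. k) x"
  unfolding cdifferentiable_at_def complex_linear3_def
  by (rule exI[of _ "\<lambda>_. 0"]) simp

lemma cdifferentiable_at_fst: "cdifferentiable_at (\<lambda>p. fst p) x"
  by (rule cdifferentiable_at_linear) (auto intro: bounded_linear_fst simp: complex_linear3_def)

lemma cdifferentiable_at_fst_snd: "cdifferentiable_at (\<lambda>p. fst (snd p)) x"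
  by (rule cdifferentiable_at_linear)
     (auto intro: bounded_linear_compose[OF bounded_linear_fst bounded_linear_snd]
       simp: complex_linear3_def)

lemma cdifferentiable_at_snd_snd: "cdifferentiable_at (\<lambda>p. snd (snd p)) x"
  by (rule cdifferentiable_at_linear)
     (auto intro: bounded_linear_compose[OF bounded_linear_snd bounded_linear_snd]
       simp: complex_linear3_def)

lemma cdifferentiable_at_add:
  assumes "cdifferentiable_at f x" "cdifferentiable_at g x"
  shows "cdifferentiable_at (\<lambda>p. f p + g p) x"
proof -
  obtain L M where "(f has_derivative L) (at x)" "complex_linear3 L"
    and "(g has_derivative M) (at x)" "complex_linear3 M"
    using assms unfolding cdifferentiable_at_def by blast
  then show ?thesis
    unfolding cdifferentiable_at_def complex_linear3_def
    by (intro exI[of _ "\<lambda>h. L h + M h"]) (auto intro: has_derivative_add simp: distrib_left)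
qed

lemma cdifferentiable_at_diff:
  assumes "cdifferentiable_at f x" "cdifferentiable_at g x"
  shows "cdifferentiable_at (\<lambda>p. f p - g p) x"
proof -
  obtain L M where "(f has_derivative L) (at x)" "complex_linear3 L"
    and "(g has_derivative M) (at x)" "complex_linear3 M"
    using assms unfolding cdifferentiable_at_def by blast
  then show ?thesis
    unfolding cdifferentiable_at_def complex_linear3_def
    by (intro exI[of _ "\<lambda>h. L h - M h"]) (auto intro: has_derivative_diff simp: right_diff_distrib)
qed

lemma cdifferentiable_at_mult:
  assumes "cdifferentiable_at f x" "cdifferentiable_at g x"
  shows "cdifferentiable_at (\<lambda>p. f p * g p) x"
proof -
  obtain L M where L: "(f has_derivative L) (at x)" "complex_linear3 L"
    and M: "(g has_derivative M) (at x)" "complex_linear3 M"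
    using assms unfolding cdifferentiable_at_def by blast
  have "complex_linear3 (\<lambda>h. f x * M h + L h * g x)"
    using L(2) M(2) unfolding complex_linear3_def by (simp add: algebra_simps)
  then show ?thesis
    unfolding cdifferentiable_at_def using has_derivative_mult[OF L(1) M(1)] by blast
qed

lemma cdifferentiable_at_divide:
  assumes "cdifferentiable_at f x" "cdifferentiable_at g x" "g x \<noteq> 0"
  shows "cdifferentiable_at (\<lambda>p. f p / g p) x"
proof -
  obtain L M where L: "(f has_derivative L) (at x)" "complex_linear3 L"
    and M: "(g has_derivative M) (at x)" "complex_linear3 M"
    using assms unfolding cdifferentiable_at_def by blast
  have "complex_linear3 (\<lambda>h. - f x * (inverse (g x) * M h * inverse (g x)) + L h / g x)"
    using L(2) M(2) unfolding complex_linear3_def by (simp add: algebra_simps)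
  then show ?thesis
    unfolding cdifferentiable_at_def using has_derivative_divide[OF L(1) M(1) assms(3)] by blast
qed

lemma cdifferentiable_at_power:
  assumes "cdifferentiable_at f x"
  shows "cdifferentiable_at (\<lambda>p. f p ^ n) x"
proof (induction n)
  case 0
  then show ?case using cdifferentiable_at_const[of 1] by simp
next
  case (Suc n)
  then show ?case using cdifferentiable_at_mult[OF assms Suc] by simp
qed

lemmas cdifferentiable_at_intros =
  cdifferentiable_at_const cdifferentiable_at_fst cdifferentiable_at_fst_snd
  cdifferentiable_at_snd_snd cdifferentiable_at_add cdifferentiable_at_diff
  cdifferentiable_at_mult cdifferentiable_at_divide cdifferentiable_at_power

section \<open>The Riemann sphere\<close>

lemma openin_riemann_sphere:
  "openin riemann_sphere U \<longleftrightarrow>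
     open {z. Some z \<in> U} \<and> (None \<in> U \<longrightarrow> compact {z. Some z \<notin> U})"
proof -
  define P where "P U \<longleftrightarrow> open {z. Some z \<in> U} \<and> (None \<in> U \<longrightarrow> compact {z. Some z \<notin> U})"
    for U :: "complex option set"
  have "istopology P"
    unfolding istopology_def
  proof (intro conjI allI impI ballI)
    fix S T assume "P S" "P T"
    moreover have "{z. Some z \<notin> S \<inter> T} = {z. Some z \<notin> S} \<union> {z. Some z \<notin> T}" by auto
    ultimately show "P (S \<inter> T)"
      by (auto simp: P_def Collect_conj_eq open_Int compact_Un)
  next
    fix K assume K: "\<forall>U\<in>K. P U"
    have "{z. Some z \<in> \<Union>K} = (\<Union>U\<in>K. {z. Some z \<in> U})" by auto
    then have open_Union: "open {z. Some z \<in> \<Union>K}" using K by (auto simp: P_def)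
    have "compact {z. Some z \<notin> \<Union>K}" if "None \<in> U" "U \<in> K" for U
    proof -
      have "{z. Some z \<notin> \<Union>K} = {z. Some z \<notin> U} \<inter> - {z. Some z \<in> \<Union>K}" using that by auto
      then show ?thesis
        using K that open_Union by (auto simp: P_def)
    qed
    then show "P (\<Union>K)" using open_Union by (auto simp: P_def)
  qed
  then show ?thesis unfolding riemann_sphere_def P_def[abs_def] by simp
qed

lemma topspace_riemann_sphere [simp]: "topspace riemann_sphere = UNIV"
  using openin_subset[of riemann_sphere UNIV] by (auto simp: openin_riemann_sphere)

lemma openin_riemann_sphere_Some_image: "open V \<Longrightarrow> openin riemann_sphere (Some ` V)"
  by (simp add: openin_riemann_sphere image_iff)

lemma openin_riemann_sphere_None_nbhd:
  "compact K \<Longrightarrow> openin riemann_sphere (insert None (Some ` (- K)))"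
  by (simp add: openin_riemann_sphere image_iff compact_imp_closed open_Compl Collect_neg_eq)

lemma Hausdorff_space_riemann_sphere: "Hausdorff_space riemann_sphere"
proof -
  have separate_None: "\<exists>U V. openin riemann_sphere U \<and> openin riemann_sphere V \<and>
      None \<in> U \<and> Some b \<in> V \<and> disjnt U V" for b
    by (intro exI[of _ "insert None (Some ` (- cball b 1))"] exI[of _ "Some ` ball b 1"])
       (auto simp: openin_riemann_sphere_None_nbhd openin_riemann_sphere_Some_image disjnt_def)
  have separate_Some: "\<exists>U V. openin riemann_sphere U \<and> openin riemann_sphere V \<and>
      Some a \<in> U \<and> Some b \<in> V \<and> disjnt U V" if "a \<noteq> b" for a b
  proof -
    define r where "r = dist a b / 2"
    have "disjnt (ball a r) (ball b r)"
      unfolding disjnt_def r_def by (auto simp: dist_commute) (smt (verit) dist_triangle3)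
    then show ?thesis
      using that
      by (intro exI[of _ "Some ` ball a r"] exI[of _ "Some ` ball b r"])
         (auto simp: openin_riemann_sphere_Some_image disjnt_def r_def)
  qed
  have separate: "\<exists>U V. openin riemann_sphere U \<and> openin riemann_sphere V \<and>
      x \<in> U \<and> y \<in> V \<and> disjnt U V" if xy: "x \<noteq> y" for x y
  proof (cases x)
    case None
    then obtain b where "y = Some b" using xy by (cases y) auto
    then show ?thesis using None separate_None by blast
  next
    case (Some a)
    show ?thesis
    proof (cases y)
      case None
      obtain U V where "openin riemann_sphere U" "openin riemann_sphere V"
        "None \<in> U" "Some a \<in> V" "disjnt U V"
        using separate_None by blast
      then show ?thesis
        using Some None by (intro exI[of _ V] exI[of _ U]) (simp add: disjnt_sym)
    next
      case (Some b)
      then show ?thesis using \<open>x = Some a\<close> xy separate_Some by blast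
    qed
  qed
  then show ?thesis
    unfolding Hausdorff_space_def by blast
qed

lemma riemann_sphere_nbhd_of_None:
  assumes "openin riemann_sphere U" "None \<in> U"
  obtains r where "r > 0" "\<And>z. norm z < r \<Longrightarrow> (if z = 0 then None else Some (inverse z)) \<in> U"
proof -
  have "bounded {z. Some z \<notin> U}"
    using assms by (simp add: openin_riemann_sphere compact_imp_bounded)
  then obtain M where "M > 0" and M: "\<And>z. Some z \<notin> U \<Longrightarrow> norm z \<le> M"
    unfolding bounded_pos by blast
  have "(if z = 0 then None else Some (inverse z)) \<in> U" if "norm z < 1 / M" for z
  proof (cases "z = 0")
    case False
    then have "M < norm (inverse z)"
      using that \<open>M > 0\<close> by (subst norm_inverse) (simp add: field_simps)
    then show ?thesis using M False by force
  qed (use assms in simp)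
  then show ?thesis using \<open>M > 0\<close> that[of "1 / M"] by simp
qed

lemma holo_to_sphere_imp_continuous_map:
  assumes "holo_to_sphere F X"
  shows "continuous_map (top_of_set X) riemann_sphere F"
  unfolding continuous_map_def
proof (intro conjI allI impI)
  show "F \<in> topspace (top_of_set X) \<rightarrow> topspace riemann_sphere" by simp
  fix U assume U: "openin riemann_sphere U"
  show "openin (top_of_set X) {x \<in> topspace (top_of_set X). F x \<in> U}"
    unfolding topspace_euclidean_subtopology
  proof (subst openin_subopen, intro ballI)
    fix x assume x: "x \<in> {x \<in> X. F x \<in> U}"
    then have "x \<in> X" "F x \<in> U" by auto
    then have chart: "(F x \<noteq> None \<longrightarrow> (\<exists>V g. x \<in> V \<and> holo3 g V \<and> (\<forall>q\<in>V \<inter> X. F q = Some (g q)))) \<and>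
        (F x = None \<longrightarrow> (\<exists>V g. x \<in> V \<and> holo3 g V \<and> (\<forall>q\<in>V \<inter> X. F q \<noteq> Some 0 \<and>
           F q = (if g q = 0 then None else Some (inverse (g q))))))"
      using assms unfolding holo_to_sphere_def by blast
    have nbhd: "\<exists>T. openin (top_of_set X) T \<and> x \<in> T \<and> T \<subseteq> {x \<in> X. F x \<in> U}"
      if "open N" "x \<in> N" "\<And>q. q \<in> X \<Longrightarrow> q \<in> N \<Longrightarrow> F q \<in> U" for N
      using that \<open>x \<in> X\<close> by (intro exI[of _ "X \<inter> N"]) (auto simp: openin_open_Int)
    show "\<exists>T. openin (top_of_set X) T \<and> x \<in> T \<and> T \<subseteq> {x \<in> X. F x \<in> U}"
    proof (cases "F x")
      case (Some z)
      then obtain V g where "x \<in> V" "holo3 g V" and F: "\<And>q. q \<in> V \<inter> X \<Longrightarrow> F q = Some (g q)"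
        using chart by auto
      then have "open V" "continuous_on V g" by (auto simp: holo3_def holo3_imp_continuous_on)
      moreover have "open {z. Some z \<in> U}" using U by (simp add: openin_riemann_sphere)
      ultimately have "open (V \<inter> g -` {z. Some z \<in> U})" using continuous_open_preimage by blast
      then show ?thesis
        by (rule nbhd) (use F \<open>x \<in> V\<close> \<open>x \<in> X\<close> \<open>F x \<in> U\<close> in auto)
    next
      case None
      then obtain V g where "x \<in> V" "holo3 g V"
        and F: "\<And>q. q \<in> V \<inter> X \<Longrightarrow> F q = (if g q = 0 then None else Some (inverse (g q)))"
        using chart by auto
      then have "open V" "continuous_on V g" by (auto simp: holo3_def holo3_imp_continuous_on)
      obtain r where "r > 0" and r: "\<And>z. norm z < r \<Longrightarrow> (if z = 0 then None else Some (inverse z)) \<in> U"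
        using riemann_sphere_nbhd_of_None[OF U] None \<open>F x \<in> U\<close> by metis
      have "open (V \<inter> g -` ball 0 r)"
        using \<open>open V\<close> \<open>continuous_on V g\<close> by (simp add: continuous_open_preimage)
      moreover have "g x = 0" using F[of x] \<open>x \<in> V\<close> \<open>x \<in> X\<close> None by (auto split: if_splits)
      then have "x \<in> V \<inter> g -` ball 0 r" using \<open>x \<in> V\<close> \<open>r > 0\<close> by simp
      ultimately show ?thesis
        by (rule nbhd) (use F r in auto)
    qed
  qed
qed

lemma continuous_on_the_riemann_sphere:
  assumes "continuous_map (top_of_set S) riemann_sphere F"
  shows "continuous_on {x \<in> S. F x \<noteq> None} (\<lambda>x. the (F x))"
  unfolding continuous_on_open_invariant
proof (intro allI impI)
  fix B :: "complex set" assume "open B"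
  then have "openin (top_of_set S) {x \<in> S. F x \<in> Some ` B}"
    using assms openin_riemann_sphere_Some_image openin_continuous_map_preimage by fastforce
  then obtain A where "open A" and A: "A \<inter> S = {x \<in> S. F x \<in> Some ` B}"
    by (auto simp: openin_open)
  have "F x \<in> Some ` B \<longleftrightarrow> the (F x) \<in> B" if "F x \<noteq> None" for x
    using that by force
  then have "A \<inter> {x \<in> S. F x \<noteq> None} = (\<lambda>x. the (F x)) -` B \<inter> {x \<in> S. F x \<noteq> None}"
    using A by blast
  then show "\<exists>A. open A \<and> A \<inter> {x \<in> S. F x \<noteq> None} = (\<lambda>x. the (F x)) -` B \<inter> {x \<in> S. F x \<noteq> None}"
    using \<open>open A\<close> by blast
qed

section \<open>The fibres of Phi\<close>

lemma Phi_eq_None_iff: "Phi (A, B, C) = None \<longleftrightarrow> A = 1 \<and> C = 0"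
  by (simp add: Phi_def)

lemma in_W_Phi_eq_Some_iff:
  "(A, B, C) \<in> W \<and> Phi (A, B, C) = Some w \<longleftrightarrow> B = w * (A - 1) \<and> A ^ 3 = w * C"
proof (cases "A = 1")
  case True
  then show ?thesis by (auto simp: W_def Phi_def field_simps)
next
  case False
  then have "Phi (A, B, C) = Some w \<longleftrightarrow> B = w * (A - 1)"
    by (auto simp: Phi_def field_simps)
  then have "(A, B, C) \<in> W \<and> Phi (A, B, C) = Some w \<longleftrightarrow>
      B = w * (A - 1) \<and> A ^ 3 * (A - 1) = (w * C) * (A - 1)"
    by (auto simp: W_def ac_simps)
  also have "\<dots> \<longleftrightarrow> B = w * (A - 1) \<and> A ^ 3 = w * C"
    using False by simp
  finally show ?thesis .
qed

lemma fibre_interpolation_in_W: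
  assumes "B = w * (A - 1)" "A ^ 3 = w * C" "B' = w * (A' - 1)" "A' ^ 3 = w * C'"
    and "w * P = A\<^sup>2 * A'" "w * Q = A * A'\<^sup>2"
  shows "((1 - s) * A + s * A', (1 - s) * B + s * B',
      (1 - s) ^ 3 * C + 3 * (1 - s)\<^sup>2 * s * P + 3 * (1 - s) * s\<^sup>2 * Q + s ^ 3 * C') \<in> W"
proof -
  define X where "X = (1 - s) * A + s * A'"
  define Z where "Z = (1 - s) ^ 3 * C + 3 * (1 - s)\<^sup>2 * s * P + 3 * (1 - s) * s\<^sup>2 * Q + s ^ 3 * C'"
  have "(1 - s) * B + s * B' = w * (X - 1)"
    unfolding assms(1,3) X_def by (simp add: algebra_simps)
  moreover have "w * Z = (1 - s) ^ 3 * (w * C) + 3 * (1 - s)\<^sup>2 * s * (w * P)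
      + 3 * (1 - s) * s\<^sup>2 * (w * Q) + s ^ 3 * (w * C')"
    unfolding Z_def by (simp add: algebra_simps)
  then have "X ^ 3 = w * Z"
    unfolding assms(5,6) assms(2,4) [symmetric] X_def
    by (simp add: power2_eq_square power3_eq_cube algebra_simps)
  ultimately show ?thesis
    using in_W_Phi_eq_Some_iff unfolding X_def Z_def by blast
qed

lemma Phi_eq_Some_cube_div: "(A, B, C) \<in> W \<Longrightarrow> C \<noteq> 0 \<Longrightarrow> Phi (A, B, C) = Some (A ^ 3 / C)"
proof -
  assume "(A, B, C) \<in> W" "C \<noteq> 0"
  then obtain w where w: "Phi (A, B, C) = Some w"
    by (cases "Phi (A, B, C)") (auto simp: Phi_eq_None_iff)
  then have "A ^ 3 = w * C" using \<open>(A, B, C) \<in> W\<close> in_W_Phi_eq_Some_iff by blast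
  then show ?thesis using w \<open>C \<noteq> 0\<close> by simp
qed

lemma holo3_charts:
  "holo3 (\<lambda>p. fst (snd p) / (fst p - 1)) {p. fst p \<noteq> 1}"
  "holo3 (\<lambda>p. fst p ^ 3 / snd (snd p)) {p. snd (snd p) \<noteq> 0}"
  "holo3 (\<lambda>p. snd (snd p) / fst p ^ 3) {p. fst p \<noteq> 0}"
  "holo3 (\<lambda>p. fst p) UNIV" "holo3 (\<lambda>p. fst (snd p)) UNIV" "holo3 (\<lambda>p. snd (snd p)) UNIV"
  unfolding holo3_iff
  by (auto intro!: cdifferentiable_at_intros open_Collect_neq
      continuous_on_fst continuous_on_snd continuous_on_id continuous_on_const)

lemma holo_to_sphere_Phi: "holo_to_sphere Phi W"
  unfolding holo_to_sphere_def
proof (intro ballI conjI impI)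
  fix p assume "p \<in> W" and "Phi p \<noteq> None"
  obtain A B C where p: "p = (A, B, C)" by (cases p)
  show "\<exists>U g. p \<in> U \<and> holo3 g U \<and> (\<forall>q\<in>U \<inter> W. Phi q = Some (g q))"
  proof (cases "A = 1")
    case False
    then show ?thesis
      using p holo3_charts(1)
      by (intro exI[of _ "{p. fst p \<noteq> 1}"] exI[of _ "\<lambda>p. fst (snd p) / (fst p - 1)"])
         (auto simp: Phi_def)
  next
    case True
    then have "C \<noteq> 0" using \<open>Phi p \<noteq> None\<close> p by (simp add: Phi_eq_None_iff)
    then show ?thesis
      using p holo3_charts(2)
      by (intro exI[of _ "{p. snd (snd p) \<noteq> 0}"] exI[of _ "\<lambda>p. fst p ^ 3 / snd (snd p)"])
         (auto simp: Phi_eq_Some_cube_div)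
  qed
next
  fix p assume "p \<in> W" and "Phi p = None"
  then have "fst p \<noteq> 0" by (cases p) (simp add: Phi_eq_None_iff)
  have "Phi q \<noteq> Some 0 \<and> Phi q = (if C / A ^ 3 = 0 then None else Some (inverse (C / A ^ 3)))"
    if "(A, B, C) \<in> W" "A \<noteq> 0" and q: "q = (A, B, C)" for q A B C
  proof (cases "C = 0")
    case True
    then have "A = 1" using that by (simp add: W_def)
    then show ?thesis using True q by (simp add: Phi_def)
  next
    case False
    then show ?thesis
      using that Phi_eq_Some_cube_div[of A B C] by simp
  qed
  then show "\<exists>U g. p \<in> U \<and> holo3 g U \<and> (\<forall>q\<in>U \<inter> W. Phi q \<noteq> Some 0 \<and>
             Phi q = (if g q = 0 then None else Some (inverse (g q))))"
    using \<open>fst p \<noteq> 0\<close> holo3_charts(3)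
    by (intro exI[of _ "{p. fst p \<noteq> 0}"] exI[of _ "\<lambda>p. snd (snd p) / fst p ^ 3"]) force
qed

lemma biholo_to_CI:
  assumes "range \<phi> = Y" "holo3 \<psi> UNIV" "\<And>t. \<psi> (\<phi> t) = t"
    "(\<lambda>t. fst (\<phi> t)) holomorphic_on UNIV"
    "(\<lambda>t. fst (snd (\<phi> t))) holomorphic_on UNIV"
    "(\<lambda>t. snd (snd (\<phi> t))) holomorphic_on UNIV"
  shows "biholo_to_C Y"
  unfolding biholo_to_C_def
proof (intro exI conjI)
  show "bij_betw \<phi> UNIV Y"
    unfolding bij_betw_def using assms(1,3) by (metis injI)
qed (use assms in auto)

lemma biholo_to_C_fibre_Phi: "biholo_to_C {p \<in> W. Phi p = z}"
proof -
  have fibre_Some: "{p \<in> W. Phi p = Some w} = {(A, B, C). B = w * (A - 1) \<and> A ^ 3 = w * C}" for w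
    using in_W_Phi_eq_Some_iff by auto
  consider "z = None" | "z = Some 0" | w where "z = Some w" "w \<noteq> 0"
    by (cases z) auto
  then show ?thesis
  proof cases
    case 1
    have "range (\<lambda>t. (1, t, 0)) = {p \<in> W. Phi p = z}"
      using 1 by (auto simp: W_def Phi_eq_None_iff)
    then show ?thesis
      using holo3_charts(5) by (rule biholo_to_CI) auto
  next
    case 2
    have "range (\<lambda>t. (0, 0, t)) = {p \<in> W. Phi p = z}"
      unfolding 2 fibre_Some by auto
    then show ?thesis
      using holo3_charts(6) by (rule biholo_to_CI) auto
  next
    case 3
    have "range (\<lambda>t. (t, w * (t - 1), t ^ 3 / w)) = {p \<in> W. Phi p = z}"
      unfolding 3 fibre_Some using \<open>w \<noteq> 0\<close> by (auto simp: field_simps)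
    then show ?thesis
      using holo3_charts(4)
      by (rule biholo_to_CI) (use \<open>w \<noteq> 0\<close> in \<open>auto intro!: holomorphic_intros\<close>)
  qed
qed

section \<open>The sphere S2 and its homeomorphism onto the Riemann sphere\<close>

lemma S2E:
  assumes "p \<in> S2"
  obtains a B where "p = (complex_of_real a, B, - cnj B)" "0 \<le> a" "a \<le> 1"
    "(cmod B)\<^sup>2 = a ^ 3 * (1 - a)"
proof -
  obtain A B C where p: "p = (A, B, C)" and A: "A \<in> \<real>" "0 \<le> Re A" "Re A \<le> 1"
    and B: "cmod B = sqrt (Re A ^ 3 * (1 - Re A))" and C: "C = - cnj B"
    using assms by (auto simp: S2_def)
  have "A = complex_of_real (Re A)" using A(1) by (simp add: complex_is_Real_iff complex_eq_iff)
  moreover have "0 \<le> Re A ^ 3 * (1 - Re A)" using A by simp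
  ultimately show ?thesis using that[of "Re A" B] p C A B by simp
qed

lemma S2I:
  assumes "0 \<le> a" "a \<le> 1" "(cmod B)\<^sup>2 = a ^ 3 * (1 - a)"
  shows "(complex_of_real a, B, - cnj B) \<in> S2"
proof -
  have "cmod B = sqrt (a ^ 3 * (1 - a))" using assms(3) by (metis norm_ge_zero real_sqrt_unique)
  then show ?thesis using assms unfolding S2_def by simp
qed

lemma S2_subset_W: "S2 \<subseteq> W"
proof
  fix p assume "p \<in> S2"
  then obtain a B where p: "p = (complex_of_real a, B, - cnj B)" "(cmod B)\<^sup>2 = a ^ 3 * (1 - a)"
    by (rule S2E)
  have "B * cnj B = complex_of_real (a ^ 3 * (1 - a))"
    using p(2) by (metis complex_norm_square)
  then show "p \<in> W" using p(1) by (simp add: W_def algebra_simps)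
qed

lemma cubic_root_unique:
  fixes s a b :: real
  assumes "0 \<le> s" "0 \<le> a" "0 \<le> b" "a ^ 3 = s * (1 - a)" "b ^ 3 = s * (1 - b)"
  shows "a = b"
proof -
  have strict_mono: "x ^ 3 + s * x < y ^ 3 + s * y" if "0 \<le> x" "x < y" for x y :: real
    using that assms(1) power_strict_mono[of x y 3] mult_left_mono[of x y s] by simp
  have "a ^ 3 + s * a = s" "b ^ 3 + s * b = s" using assms(4,5) by (simp_all add: algebra_simps)
  then show ?thesis
    using strict_mono[of a b] strict_mono[of b a] assms(2,3)
    by (cases a b rule: linorder_cases) auto
qed

lemma cubic_root_exists:
  fixes s :: real
  assumes "0 \<le> s"
  shows "\<exists>a. 0 \<le> a \<and> a \<le> 1 \<and> a ^ 3 = s * (1 - a)"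
proof -
  have "\<exists>a\<ge>0. a \<le> 1 \<and> a ^ 3 + s * a = s"
    using assms by (intro IVT allI impI continuous_intros) auto
  then show ?thesis by (auto simp: algebra_simps)
qed

lemma cubic_root_le_1:
  fixes s a :: real
  assumes "0 \<le> s" "0 \<le> a" "a ^ 3 = s * (1 - a)"
  shows "a \<le> 1"
proof (rule ccontr)
  assume "\<not> a \<le> 1"
  then have "s * (1 - a) \<le> 0" using assms(1) by (simp add: mult_nonneg_nonpos)
  moreover have "0 < a ^ 3" using \<open>\<not> a \<le> 1\<close> by simp
  ultimately show False using assms(3) by simp
qed

lemma complex_mult_cnj_of_real:
  "w * cnj w * complex_of_real y = complex_of_real ((cmod w)\<^sup>2 * y)"
  by (simp only: complex_norm_square of_real_mult)

lemma in_S2_Phi_eq_Some_iff: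
  "p \<in> S2 \<and> Phi p = Some w \<longleftrightarrow> (\<exists>a. 0 \<le> a \<and> a ^ 3 = (cmod w)\<^sup>2 * (1 - a) \<and>
     p = (complex_of_real a, w * (complex_of_real a - 1), cnj w * (1 - complex_of_real a)))"
proof
  assume p: "p \<in> S2 \<and> Phi p = Some w"
  then have "p \<in> S2" by simp
  then obtain a B where a: "p = (complex_of_real a, B, - cnj B)" "0 \<le> a" by (rule S2E)
  have "(complex_of_real a, B, - cnj B) \<in> W \<and> Phi (complex_of_real a, B, - cnj B) = Some w"
    using p a(1) S2_subset_W by auto
  then have B: "B = w * (complex_of_real a - 1)" and "complex_of_real a ^ 3 = w * - cnj B"
    by (simp_all only: in_W_Phi_eq_Some_iff)
  moreover have cB: "cnj B = cnj w * (complex_of_real a - 1)" using B by simp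
  ultimately have "complex_of_real (a ^ 3) = w * cnj w * complex_of_real (1 - a)"
    by (simp add: algebra_simps)
  then have "a ^ 3 = (cmod w)\<^sup>2 * (1 - a)" by (simp only: complex_mult_cnj_of_real of_real_eq_iff)
  moreover have "- cnj B = cnj w * (1 - complex_of_real a)" using cB by (simp add: algebra_simps)
  ultimately show "\<exists>a. 0 \<le> a \<and> a ^ 3 = (cmod w)\<^sup>2 * (1 - a) \<and>
     p = (complex_of_real a, w * (complex_of_real a - 1), cnj w * (1 - complex_of_real a))"
    using a B by auto
next
  assume "\<exists>a. 0 \<le> a \<and> a ^ 3 = (cmod w)\<^sup>2 * (1 - a) \<and>
     p = (complex_of_real a, w * (complex_of_real a - 1), cnj w * (1 - complex_of_real a))"
  then obtain a where a: "0 \<le> a" "a ^ 3 = (cmod w)\<^sup>2 * (1 - a)"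
    and p: "p = (complex_of_real a, w * (complex_of_real a - 1), cnj w * (1 - complex_of_real a))"
    by blast
  have "a \<le> 1" by (rule cubic_root_le_1[OF zero_le_power2 a])
  have "cmod (complex_of_real a - 1) = \<bar>a - 1\<bar>" by (metis norm_of_real of_real_1 of_real_diff)
  then have "(cmod (w * (complex_of_real a - 1)))\<^sup>2 = (cmod w)\<^sup>2 * (1 - a)\<^sup>2"
    by (simp add: norm_mult power_mult_distrib power2_commute)
  also have "\<dots> = a ^ 3 * (1 - a)" using a(2) by (simp add: power2_eq_square)
  finally have
    "(complex_of_real a, w * (complex_of_real a - 1), - cnj (w * (complex_of_real a - 1))) \<in> S2"
    by (rule S2I[OF a(1) \<open>a \<le> 1\<close>])
  then have "p \<in> S2" using p by (simp add: algebra_simps)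
  moreover have "complex_of_real (a ^ 3) = w * cnj w * complex_of_real (1 - a)"
    using a(2) by (simp only: complex_mult_cnj_of_real)
  then have "complex_of_real a ^ 3 = w * (cnj w * (1 - complex_of_real a))"
    by (simp add: mult.assoc)
  then have "Phi p = Some w"
    using p in_W_Phi_eq_Some_iff by blast
  ultimately show "p \<in> S2 \<and> Phi p = Some w" by blast
qed

lemma in_S2_Phi_eq_None_iff: "p \<in> S2 \<and> Phi p = None \<longleftrightarrow> p = (1, 0, 0)"
proof
  assume p: "p \<in> S2 \<and> Phi p = None"
  then obtain a B where "p = (complex_of_real a, B, - cnj B)" "(cmod B)\<^sup>2 = a ^ 3 * (1 - a)"
    using S2E by metis
  with p show "p = (1, 0, 0)" by (simp add: Phi_eq_None_iff)
next
  assume "p = (1, 0, 0)"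
  then show "p \<in> S2 \<and> Phi p = None"
    using S2I[of 1 0] by (simp add: Phi_eq_None_iff)
qed

lemma S2_Phi_eq_Some_0: "p \<in> S2 \<Longrightarrow> Phi p = Some 0 \<Longrightarrow> p = (0, 0, 0)"
  using in_S2_Phi_eq_Some_iff[of p 0] by auto

lemma bij_betw_Phi_S2: "bij_betw Phi S2 UNIV"
  unfolding bij_betw_def
proof
  show "inj_on Phi S2"
  proof (rule inj_onI)
    fix p q assume "p \<in> S2" "q \<in> S2" "Phi p = Phi q"
    then show "p = q"
    proof (cases "Phi p")
      case None
      then show ?thesis
        using \<open>p \<in> S2\<close> \<open>q \<in> S2\<close> \<open>Phi p = Phi q\<close> in_S2_Phi_eq_None_iff by metis
    next
      case (Some w)
      then obtain a b where "0 \<le> a" "a ^ 3 = (cmod w)\<^sup>2 * (1 - a)"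
        "p = (complex_of_real a, w * (complex_of_real a - 1), cnj w * (1 - complex_of_real a))"
        "0 \<le> b" "b ^ 3 = (cmod w)\<^sup>2 * (1 - b)"
        "q = (complex_of_real b, w * (complex_of_real b - 1), cnj w * (1 - complex_of_real b))"
        using \<open>p \<in> S2\<close> \<open>q \<in> S2\<close> \<open>Phi p = Phi q\<close> in_S2_Phi_eq_Some_iff by metis
      then show ?thesis using cubic_root_unique[of "(cmod w)\<^sup>2" a b] by simp
    qed
  qed
  have "z \<in> Phi ` S2" for z
  proof (cases z)
    case None
    then show ?thesis using in_S2_Phi_eq_None_iff by (metis image_eqI)
  next
    case (Some w)
    obtain a where "0 \<le> a" "a ^ 3 = (cmod w)\<^sup>2 * (1 - a)"
      using cubic_root_exists[of "(cmod w)\<^sup>2"] by auto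
    then have "\<exists>p. p \<in> S2 \<and> Phi p = Some w"
      using in_S2_Phi_eq_Some_iff by blast
    then show ?thesis using Some by force
  qed
  then show "Phi ` S2 = UNIV" by blast
qed

(* With a = (1 + x) / 2 and B = a w / 2, the sphere equation x^2 + |w|^2 = 1 becomes
   |B|^2 = a^2 (1 - x^2) / 4 = a^3 (1 - a). *)
definition sphere_to_S2 :: "real \<times> complex \<Rightarrow> pt" where
  "sphere_to_S2 q = (complex_of_real ((1 + fst q) / 2), complex_of_real ((1 + fst q) / 4) * snd q,
     - cnj (complex_of_real ((1 + fst q) / 4) * snd q))"

lemma in_unit_sphere_iff: "(x, w) \<in> sphere (0 :: real \<times> complex) 1 \<longleftrightarrow> x\<^sup>2 + (cmod w)\<^sup>2 = 1"
  by (simp add: norm_Pair)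

lemma image_sphere_to_S2_subset: "sphere_to_S2 ` sphere 0 1 \<subseteq> S2"
proof (rule image_subsetI)
  fix q :: "real \<times> complex" assume "q \<in> sphere 0 1"
  obtain x w where q: "q = (x, w)" by (cases q)
  with \<open>q \<in> sphere 0 1\<close> have "x\<^sup>2 + (cmod w)\<^sup>2 = 1" by (simp only: in_unit_sphere_iff)
  then have sph: "(cmod w)\<^sup>2 = 1 - x\<^sup>2" by simp
  then have "x\<^sup>2 \<le> 1" using zero_le_power2[of "cmod w"] by linarith
  then have x: "-1 \<le> x" "x \<le> 1" by (auto simp: abs_square_le_1 abs_le_iff)
  define a where "a = (1 + x) / 2"
  have "(cmod (complex_of_real ((1 + x) / 4) * w))\<^sup>2 = ((1 + x) / 4)\<^sup>2 * (cmod w)\<^sup>2"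
    by (simp only: norm_mult norm_of_real power_mult_distrib power2_abs)
  also have "\<dots> = (1 + x)\<^sup>2 * (cmod w)\<^sup>2 / 16"
    by (simp add: power_divide)
  also have "\<dots> = a ^ 3 * (1 - a)"
    unfolding sph a_def by (simp add: field_simps power2_eq_square power3_eq_cube)
  finally have "(complex_of_real a, complex_of_real ((1 + x) / 4) * w,
      - cnj (complex_of_real ((1 + x) / 4) * w)) \<in> S2"
    by (rule S2I[rotated 2]) (use x in \<open>auto simp: a_def\<close>)
  then show "sphere_to_S2 q \<in> S2"
    by (simp only: q sphere_to_S2_def fst_conv snd_conv a_def)
qed

lemma S2_subset_image_sphere_to_S2: "S2 \<subseteq> sphere_to_S2 ` sphere 0 1"
proof
  fix p assume "p \<in> S2"
  then obtain a B where p: "p = (complex_of_real a, B, - cnj B)" "0 \<le> a" "a \<le> 1"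
    and B: "(cmod B)\<^sup>2 = a ^ 3 * (1 - a)"
    by (rule S2E)
  show "p \<in> sphere_to_S2 ` sphere 0 1"
  proof (cases "a = 0")
    case True
    then have "p = sphere_to_S2 (-1, 0)" using p B by (simp add: sphere_to_S2_def)
    moreover have "(-1, 0) \<in> sphere (0 :: real \<times> complex) 1" by simp
    ultimately show ?thesis by blast
  next
    case False
    define w where "w = complex_of_real (2 / a) * B"
    have "(cmod w)\<^sup>2 = (2 / a)\<^sup>2 * (cmod B)\<^sup>2"
      unfolding w_def by (simp only: norm_mult norm_of_real power_mult_distrib power2_abs)
    also have "\<dots> = 1 - (2 * a - 1)\<^sup>2"
      using False unfolding B by (simp add: field_simps power2_eq_square power3_eq_cube)
    finally have "(2 * a - 1, w) \<in> sphere 0 1" by (simp only: in_unit_sphere_iff)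
    moreover have "p = sphere_to_S2 (2 * a - 1, w)"
      using p False by (simp add: sphere_to_S2_def w_def)
    ultimately show ?thesis by blast
  qed
qed

lemma sphere_to_S2_image: "sphere_to_S2 ` sphere 0 1 = S2"
  using image_sphere_to_S2_subset S2_subset_image_sphere_to_S2 by (rule subset_antisym)

lemma inj_on_sphere_to_S2: "inj_on sphere_to_S2 (sphere 0 1)"
proof (rule inj_onI, clarify)
  fix x w x' w'
  assume "(x, w) \<in> sphere (0 :: real \<times> complex) 1" "(x', w') \<in> sphere (0 :: real \<times> complex) 1"
    and eq: "sphere_to_S2 (x, w) = sphere_to_S2 (x', w')"
  then have sph: "x\<^sup>2 + (cmod w)\<^sup>2 = 1" "x'\<^sup>2 + (cmod w')\<^sup>2 = 1"
    by (simp_all only: in_unit_sphere_iff)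
  from eq have "x = x'" by (simp add: sphere_to_S2_def)
  moreover have "w = w'"
  proof (cases "x = -1")
    case True
    then show ?thesis using sph \<open>x = x'\<close> by simp
  next
    case False
    then have "(1 + x) / 4 \<noteq> 0" by simp
    then have "complex_of_real ((1 + x) / 4) \<noteq> 0" by (simp only: of_real_eq_0_iff not_False_eq_True)
    moreover have "complex_of_real ((1 + x) / 4) * w = complex_of_real ((1 + x) / 4) * w'"
      using arg_cong[OF eq, of "\<lambda>p. fst (snd p)"]
      by (simp only: sphere_to_S2_def fst_conv snd_conv \<open>x = x'\<close>)
    ultimately show ?thesis using mult_left_cancel by blast
  qed
  ultimately show "x = x' \<and> w = w'" by blast
qed

lemma continuous_on_sphere_to_S2: "continuous_on A sphere_to_S2"
  unfolding sphere_to_S2_def by (intro continuous_intros) auto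

lemma compact_S2: "compact S2"
  using compact_continuous_image[OF continuous_on_sphere_to_S2,
      of "sphere (0 :: real \<times> complex) 1"]
  by (simp add: sphere_to_S2_image)

lemma S2_homeomorphic_sphere: "S2 homeomorphic sphere (0 :: real ^ 3) 1"
proof -
  have "sphere (0 :: real \<times> complex) 1 homeomorphic S2"
    unfolding homeomorphic_def
    using homeomorphism_compact[OF compact_sphere continuous_on_sphere_to_S2
        sphere_to_S2_image inj_on_sphere_to_S2]
    by blast
  moreover have "sphere (0 :: real \<times> complex) 1 homeomorphic sphere (0 :: real ^ 3) 1"
    by (rule homeomorphic_spheres') auto
  ultimately show ?thesis
    by (meson homeomorphic_sym homeomorphic_trans)
qed

lemma continuous_map_Phi: "continuous_map (top_of_set W) riemann_sphere Phi"
  by (rule holo_to_sphere_imp_continuous_map[OF holo_to_sphere_Phi])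

lemma homeomorphic_map_Phi_S2: "homeomorphic_map (top_of_set S2) riemann_sphere Phi"
proof (rule continuous_imp_homeomorphic_map)
  show "continuous_map (top_of_set S2) riemann_sphere Phi"
    using continuous_map_Phi S2_subset_W by (rule continuous_map_from_subtopology_mono)
  show "compact_space (top_of_set S2)"
    by (simp add: compact_space_subtopology compact_S2)
  show "Hausdorff_space riemann_sphere" by (rule Hausdorff_space_riemann_sphere)
  show "Phi ` topspace (top_of_set S2) = topspace riemann_sphere"
    "inj_on Phi (topspace (top_of_set S2))"
    using bij_betw_Phi_S2 by (simp_all add: bij_betw_def)
qed

section \<open>The deformation retraction\<close>

definition retract_S2 :: "pt \<Rightarrow> pt" where
  "retract_S2 p = inv_into S2 Phi (Phi p)"

lemma retract_S2_in_S2: "retract_S2 p \<in> S2"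
  unfolding retract_S2_def using bij_betw_Phi_S2 by (simp add: bij_betw_def inv_into_into)

lemma Phi_retract_S2: "Phi (retract_S2 p) = Phi p"
  unfolding retract_S2_def using bij_betw_Phi_S2 by (simp add: bij_betw_def f_inv_into_f)

lemma retract_S2_eq_self: "p \<in> S2 \<Longrightarrow> retract_S2 p = p"
  unfolding retract_S2_def using bij_betw_Phi_S2 by (simp add: bij_betw_def)

lemma retract_S2_None: "Phi p = None \<Longrightarrow> retract_S2 p = (1, 0, 0)"
  using in_S2_Phi_eq_None_iff retract_S2_in_S2 Phi_retract_S2 by metis

lemma continuous_on_retract_S2: "continuous_on W retract_S2"
proof -
  obtain g where g: "homeomorphic_maps (top_of_set S2) riemann_sphere Phi g"
    using homeomorphic_map_Phi_S2 homeomorphic_map_maps by blast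
  then have g_cont: "continuous_map riemann_sphere (top_of_set S2) g"
    and g_inv: "\<And>z. g z \<in> S2 \<and> Phi (g z) = z"
    by (auto simp: homeomorphic_maps_def continuous_map_def)
  have "retract_S2 = g \<circ> Phi"
  proof
    fix p
    show "retract_S2 p = (g \<circ> Phi) p"
      unfolding retract_S2_def o_def using bij_betw_Phi_S2 g_inv
      by (metis bij_betw_def inv_into_f_eq)
  qed
  then have "continuous_map (top_of_set W) (top_of_set S2) retract_S2"
    using continuous_map_compose[OF continuous_map_Phi g_cont] by simp
  then show ?thesis by simp
qed

(* Over w = 0 the division by zero yields 0: like the value over infinity, this is the
   continuous extension (cf. cross_term_cube). *)
definition cross_term :: "nat \<Rightarrow> pt \<Rightarrow> complex" where
  "cross_term k p = (case Phi p of None \<Rightarrow> 0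
     | Some w \<Rightarrow> fst p ^ (3 - k) * fst (retract_S2 p) ^ k / w)"

lemma Phi_mult_cross_term:
  assumes "p \<in> W" "Phi p = Some w" "k < 3"
  shows "w * cross_term k p = fst p ^ (3 - k) * fst (retract_S2 p) ^ k"
proof (cases "w = 0")
  case True
  obtain A B C where p: "p = (A, B, C)" by (cases p)
  then have "A ^ 3 = w * C" using assms(1,2) in_W_Phi_eq_Some_iff by blast
  then have "A = 0" using True by simp
  then show ?thesis using p True \<open>k < 3\<close> by simp
next
  case False
  then show ?thesis using assms(2) by (simp add: cross_term_def)
qed

lemma cross_term_S2:
  assumes "p \<in> S2" "k < 3"
  shows "cross_term k p = snd (snd p)"
proof (cases "Phi p")
  case None
  then have "p = (1, 0, 0)" using assms(1) in_S2_Phi_eq_None_iff by blast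
  then show ?thesis using None by (simp add: cross_term_def)
next
  case (Some w)
  obtain A B C where p: "p = (A, B, C)" by (cases p)
  show ?thesis
  proof (cases "w = 0")
    case True
    then have "p = (0, 0, 0)" using assms(1) Some S2_Phi_eq_Some_0 by blast
    then show ?thesis using Some True by (simp add: cross_term_def)
  next
    case False
    have "p \<in> W" using assms(1) S2_subset_W by blast
    then have "A ^ 3 = w * C" using Some p in_W_Phi_eq_Some_iff by blast
    moreover have "w * cross_term k p = A ^ 3"
      using Phi_mult_cross_term[OF \<open>p \<in> W\<close> Some \<open>k < 3\<close>] retract_S2_eq_self[OF assms(1)] p
        \<open>k < 3\<close> by (simp flip: power_add)
    ultimately show ?thesis using p False by simp
  qed
qed

lemma cross_term_cube:
  assumes "p \<in> W" "0 < k" "k < 3"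
  shows "cross_term k p ^ 3 = snd (snd p) ^ (3 - k) * snd (snd (retract_S2 p)) ^ k"
proof (cases "Phi p")
  case None
  then have "snd (snd p) = 0" by (cases p) (simp add: Phi_eq_None_iff)
  then show ?thesis using None \<open>k < 3\<close> by (simp add: cross_term_def)
next
  case (Some w)
  obtain A B C where p: "p = (A, B, C)" by (cases p)
  obtain A' B' C' where q: "retract_S2 p = (A', B', C')" by (cases "retract_S2 p")
  show ?thesis
  proof (cases "w = 0")
    case True
    then have "retract_S2 p = (0, 0, 0)"
      using Some S2_Phi_eq_Some_0 retract_S2_in_S2 Phi_retract_S2 by metis
    then show ?thesis using Some True \<open>0 < k\<close> by (simp add: cross_term_def)
  next
    case False
    have "A ^ 3 = w * C" using assms(1) Some p in_W_Phi_eq_Some_iff by blast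
    have "(A', B', C') \<in> W \<and> Phi (A', B', C') = Some w"
      using retract_S2_in_S2[of p] S2_subset_W Phi_retract_S2[of p] Some q by auto
    then have "A' ^ 3 = w * C'" by (simp only: in_W_Phi_eq_Some_iff)
    have "(A ^ (3 - k) * A' ^ k / w) ^ 3 = (A ^ 3) ^ (3 - k) * (A' ^ 3) ^ k / w ^ 3"
      by (simp only: power_divide power_mult_distrib power_mult[symmetric] mult.commute)
    also have "\<dots> = (w ^ (3 - k) * w ^ k) * (C ^ (3 - k) * C' ^ k) / w ^ 3"
      unfolding \<open>A ^ 3 = w * C\<close> \<open>A' ^ 3 = w * C'\<close> by (simp only: power_mult_distrib mult_ac)
    also have "\<dots> = C ^ (3 - k) * C' ^ k"
      using False \<open>k < 3\<close> by (simp flip: power_add)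
    finally show ?thesis using Some p q by (simp add: cross_term_def)
  qed
qed

lemma continuous_on_cross_term:
  assumes "0 < k" "k < 3"
  shows "continuous_on W (cross_term k)"
proof -
  define G where "G = {p \<in> W. Phi p \<in> Some ` (- {0})}"
  define h where "h p = root 3 (norm (snd (snd p)) ^ (3 - k) * norm (snd (snd (retract_S2 p))) ^ k)"
    for p
  have "openin (top_of_set W) G"
    unfolding G_def
    using openin_continuous_map_preimage[OF continuous_map_Phi
        openin_riemann_sphere_Some_image[OF open_Compl[OF closed_singleton]]]
    by simp
  moreover have "continuous_on G (cross_term k)"
  proof -
    have "continuous_on G retract_S2"
      by (rule continuous_on_subset[OF continuous_on_retract_S2]) (auto simp: G_def)
    moreover have "continuous_on G (\<lambda>p. the (Phi p))"
      by (rule continuous_on_subset[OF continuous_on_the_riemann_sphere[OF continuous_map_Phi]])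
         (auto simp: G_def)
    ultimately have "continuous_on G (\<lambda>p. fst p ^ (3 - k) * fst (retract_S2 p) ^ k / the (Phi p))"
      by (intro continuous_intros) (auto simp: G_def)
    then show ?thesis
      by (rule continuous_on_eq) (auto simp: G_def cross_term_def)
  qed
  moreover have "continuous_on W h"
    unfolding h_def by (intro continuous_intros continuous_on_retract_S2)
  moreover have "norm (cross_term k p) \<le> h p" if "p \<in> W" for p
    using arg_cong[OF cross_term_cube[OF that assms], of "\<lambda>z. root 3 (norm z)"]
    by (simp add: h_def norm_mult norm_power real_root_power_cancel)
  moreover have "h p = 0" if "p \<in> W - G" for p
  proof (cases "Phi p")
    case None
    then have "snd (snd p) = 0" by (cases p) (simp add: Phi_eq_None_iff)
    then show ?thesis using \<open>k < 3\<close> by (simp add: h_def)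
  next
    case (Some w)
    then have "w = 0" using that by (auto simp: G_def)
    then have "retract_S2 p = (0, 0, 0)"
      using Some S2_Phi_eq_Some_0 retract_S2_in_S2 Phi_retract_S2 by metis
    then show ?thesis using \<open>0 < k\<close> by (simp add: h_def)
  qed
  ultimately show ?thesis by (rule continuous_on_dominated_off_openin)
qed

definition fibre_homotopy :: "real \<times> pt \<Rightarrow> pt" where
  "fibre_homotopy x = (let s = complex_of_real (fst x); p = snd x; q = retract_S2 p in
     ((1 - s) * fst p + s * fst q,
      (1 - s) * fst (snd p) + s * fst (snd q),
      (1 - s) ^ 3 * snd (snd p) + 3 * (1 - s)\<^sup>2 * s * cross_term 1 p
        + 3 * (1 - s) * s\<^sup>2 * cross_term 2 p + s ^ 3 * snd (snd q)))"

lemma fibre_homotopy_0: "fibre_homotopy (0, p) = p"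
  by (simp add: fibre_homotopy_def)

lemma fibre_homotopy_1: "fibre_homotopy (1, p) = retract_S2 p"
  by (simp add: fibre_homotopy_def)

lemma fibre_homotopy_S2: "p \<in> S2 \<Longrightarrow> fibre_homotopy (t, p) = p"
proof -
  assume "p \<in> S2"
  obtain A B C where p: "p = (A, B, C)" by (cases p)
  define s where "s = complex_of_real t"
  have "(1 - s) ^ 3 * C + 3 * (1 - s)\<^sup>2 * s * C + 3 * (1 - s) * s\<^sup>2 * C + s ^ 3 * C = C"
    by (simp add: power2_eq_square power3_eq_cube algebra_simps)
  then show ?thesis
    using p retract_S2_eq_self[OF \<open>p \<in> S2\<close>] cross_term_S2[OF \<open>p \<in> S2\<close>]
    by (simp add: fibre_homotopy_def s_def algebra_simps)
qed

lemma fibre_homotopy_in_W: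
  assumes "p \<in> W"
  shows "fibre_homotopy (t, p) \<in> W"
proof -
  obtain A B C where p: "p = (A, B, C)" by (cases p)
  obtain A' B' C' where q: "retract_S2 p = (A', B', C')" by (cases "retract_S2 p")
  show ?thesis
  proof (cases "Phi p")
    case None
    then have "A = 1" "C = 0" using p by (simp_all add: Phi_eq_None_iff)
    then show ?thesis
      using p None retract_S2_None[OF None]
      by (simp add: fibre_homotopy_def cross_term_def W_def)
  next
    case (Some w)
    have "(A', B', C') \<in> W \<and> Phi (A', B', C') = Some w"
      using retract_S2_in_S2[of p] S2_subset_W Phi_retract_S2[of p] Some q by auto
    then have "B' = w * (A' - 1)" "A' ^ 3 = w * C'"
      by (simp_all only: in_W_Phi_eq_Some_iff)
    moreover have "B = w * (A - 1)" "A ^ 3 = w * C"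
      using assms Some p in_W_Phi_eq_Some_iff by blast+
    moreover have "w * cross_term 1 p = A\<^sup>2 * A'" "w * cross_term 2 p = A * A'\<^sup>2"
      using Phi_mult_cross_term[OF assms Some, of 1] Phi_mult_cross_term[OF assms Some, of 2] p q
      by simp_all
    ultimately show ?thesis
      using fibre_interpolation_in_W p q by (simp add: fibre_homotopy_def Let_def)
  qed
qed

lemma continuous_on_fibre_homotopy: "continuous_on ({0..1} \<times> W) fibre_homotopy"
proof -
  have on_snd: "continuous_on ({0..1} \<times> W) (\<lambda>x. f (snd x))" if "continuous_on W f"
    for f :: "pt \<Rightarrow> 'a::topological_space"
    by (rule continuous_on_compose2[OF that continuous_on_snd[OF continuous_on_id]]) auto
  show ?thesis
    unfolding fibre_homotopy_def Let_def
    by (intro continuous_intros on_snd continuous_on_retract_S2 continuous_on_cross_term) auto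
qed

lemma deformation_retract_of_S2_W: "deformation_retract_of S2 W"
  unfolding deformation_retract_of_def
proof (intro conjI exI)
  show "S2 \<subseteq> W" by (rule S2_subset_W)
  show "retract_S2 ` W \<subseteq> S2" using retract_S2_in_S2 by blast
  show "\<forall>x\<in>S2. retract_S2 x = x" using retract_S2_eq_self by blast
  show "homotopic_with (\<lambda>h. \<forall>x\<in>S2. h x = x) (top_of_set W) (top_of_set W) id retract_S2"
    unfolding homotopic_with_def
  proof (intro exI conjI)
    show "continuous_map (prod_topology (top_of_set {0..1}) (top_of_set W)) (top_of_set W)
        fibre_homotopy"
      using continuous_on_fibre_homotopy fibre_homotopy_in_W
      by auto
  qed (simp_all add: fibre_homotopy_0 fibre_homotopy_1 fibre_homotopy_S2)
qed

theorem mainTheorem13: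
  shows "top_of_set W homotopy_equivalent_space top_of_set (sphere (0::real^3) 1)
    \<and> holo_to_sphere Phi W
    \<and> Phi ` W = UNIV
    \<and> (\<forall>w. biholo_to_C {p \<in> W. Phi p = w})
    \<and> S2 \<subseteq> W
    \<and> top_of_set S2 homeomorphic_space top_of_set (sphere (0::real^3) 1)
    \<and> deformation_retract_of S2 W
    \<and> homeomorphic_map (top_of_set S2) riemann_sphere Phi"
proof -
  have sphere: "top_of_set S2 homeomorphic_space top_of_set (sphere (0::real^3) 1)"
    using S2_homeomorphic_sphere by simp
  have "top_of_set W homotopy_equivalent_space top_of_set (sphere (0::real^3) 1)"
    using deformation_retract_of_imp_homotopy_equivalent_space[OF deformation_retract_of_S2_W]
      homeomorphic_imp_homotopy_equivalent_space[OF sphere]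
    by (rule homotopy_eqv_trans)
  moreover have "Phi ` W = UNIV"
    using bij_betw_Phi_S2 S2_subset_W by (metis bij_betw_def image_mono top.extremum_uniqueI)
  ultimately show ?thesis
    using holo_to_sphere_Phi biholo_to_C_fibre_Phi S2_subset_W sphere deformation_retract_of_S2_W
      homeomorphic_map_Phi_S2
    by blast
qed

end
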